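(* Every reduced spherical curve $P$ has at least one of the following: (i) a bigon; (ii) a trigon $R$ and a region $R'\neq R$ such that $R'$ is a trigon or a $4$-gon and $R'$ shares an edge or a crossing with $R$. Here the regions sharing an edge or a crossing with a trigon are the six regions around it: three share an edge with it, and three are diagonally opposite to it at its crossings.
   Context: A spherical curve is a smooth immersion $P:S^1\to S^2$ whose self-intersections are finitely many transverse double points, called crossings. It has at least one crossing. Regions are the components of $S^2\setminus P(S^1)$, and edges are the arcs of the curve between consecutive crossings. An $n$-gon is a region whose boundary consists of $n$ edges; a bigon is a $2$-gon and a trigon is a $3$-gon. A crossing $p$ is reducible if only three distinct regions (rather than four) meet at $p$; equivalently, no other crossing is interlaced with $p$ in the Gauss word. $P$ is reduced if it has no reducible crossing. *)

theory Defs
  imports "HOL-Combinatorics.Permutations"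
begin

(* Combinatorial encoding of a spherical curve as a 4-regular map on the sphere
   (permutation representation).  Darts = half-edges at crossings.
   alpha : fixed-point-free involution pairing the two half-edges of an edge;
   sigma : cyclic (counterclockwise) rotation of the four half-edges at a crossing;
   the curve goes straight through a crossing: dart d is continued by sigma^2 d;
   regions (faces) are the orbits of sigma o alpha. *)

definition orbit_of :: "('a \<Rightarrow> 'a) \<Rightarrow> 'a \<Rightarrow> 'a set" where
  "orbit_of f x = {(f ^^ n) x | n. True}"

definition crossings :: "'a set \<Rightarrow> ('a \<Rightarrow> 'a) \<Rightarrow> 'a set set" where
  "crossings D sigma = orbit_of sigma ` D"

definition edges :: "'a set \<Rightarrow> ('a \<Rightarrow> 'a) \<Rightarrow> 'a set set" where
  "edges D alpha = orbit_of alpha ` D"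

definition region_of :: "('a \<Rightarrow> 'a) \<Rightarrow> ('a \<Rightarrow> 'a) \<Rightarrow> 'a \<Rightarrow> 'a set" where
  "region_of alpha sigma d = orbit_of (sigma \<circ> alpha) d"

definition regions :: "'a set \<Rightarrow> ('a \<Rightarrow> 'a) \<Rightarrow> ('a \<Rightarrow> 'a) \<Rightarrow> 'a set set" where
  "regions D alpha sigma = region_of alpha sigma ` D"

definition straight :: "('a \<Rightarrow> 'a) \<Rightarrow> ('a \<Rightarrow> 'a) \<Rightarrow> 'a \<Rightarrow> 'a" where
  "straight alpha sigma = (sigma ^^ 2) \<circ> alpha"

definition spherical_curve :: "'a set \<Rightarrow> ('a \<Rightarrow> 'a) \<Rightarrow> ('a \<Rightarrow> 'a) \<Rightarrow> bool" where
  "spherical_curve D alpha sigma \<longleftrightarrow>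
     finite D \<and> D \<noteq> {} \<and>
     alpha permutes D \<and> (\<forall>d\<in>D. alpha d \<noteq> d \<and> alpha (alpha d) = d) \<and>
     sigma permutes D \<and> (\<forall>d\<in>D. card (orbit_of sigma d) = 4) \<and>
     \<comment> \<open>one immersed circle: every half-edge lies on the straight-ahead traversal
         starting from any dart, in one of the two directions\<close>
     (\<forall>d\<in>D. \<forall>e\<in>D. e \<in> orbit_of (straight alpha sigma) d \<or>
                       alpha e \<in> orbit_of (straight alpha sigma) d) \<and>
     \<comment> \<open>the underlying map is on the sphere (Euler characteristic 2)\<close>
     int (card (crossings D sigma)) - int (card (edges D alpha))
       + int (card (regions D alpha sigma)) = 2"

(* regions meeting at the crossing of dart d: one per corner d, sigma d, sigma^2 d, sigma^3 d *)
definition reduced :: "'a set \<Rightarrow> ('a \<Rightarrow> 'a) \<Rightarrow> ('a \<Rightarrow> 'a) \<Rightarrow> bool" where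
  "reduced D alpha sigma \<longleftrightarrow>
     (\<forall>d\<in>D. card (region_of alpha sigma ` orbit_of sigma d) = 4)"

(* an n-gon: a region whose boundary consists of n edges (counted along the boundary) *)
definition is_ngon :: "nat \<Rightarrow> 'a set \<Rightarrow> ('a \<Rightarrow> 'a) \<Rightarrow> ('a \<Rightarrow> 'a) \<Rightarrow> 'a set \<Rightarrow> bool" where
  "is_ngon n D alpha sigma R \<longleftrightarrow> R \<in> regions D alpha sigma \<and> card R = n"

definition share_edge :: "('a \<Rightarrow> 'a) \<Rightarrow> 'a set \<Rightarrow> 'a set \<Rightarrow> bool" where
  "share_edge alpha R R' \<longleftrightarrow> (\<exists>x\<in>R. alpha x \<in> R')"

definition share_crossing :: "('a \<Rightarrow> 'a) \<Rightarrow> 'a set \<Rightarrow> 'a set \<Rightarrow> bool" where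
  "share_crossing sigma R R' \<longleftrightarrow> (\<exists>x\<in>R. \<exists>y\<in>R'. y \<in> orbit_of sigma x)"

end

theory Submission
  imports Defs "HOL-Combinatorics.Orbits"
begin

(* Discharging.  With phi = sigma o alpha, the regions are the orbits of phi and Euler's formula
   for the 4-valent map gives  sum over regions R of 3 (4 - |R|) = 24.  Let every trigon send one
   unit of charge across each of its three edges.  If there were no bigon and no trigon next to a
   trigon or 4-gon, then (reducedness excludes monogons) every region has at least 3 edges, every
   region receiving charge has at least 5 edges, and two consecutive edges of a region never both
   border trigons (those trigons would share a crossing), so a region with n >= 5 edges receives at
   most n/2.  Hence every final charge is <= 0, contradicting the total 24. *)

lemma orbit_of_funpow: "(f ^^ n) x \<in> orbit_of f x"
  unfolding orbit_of_def by blast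

lemma orbit_of_self: "x \<in> orbit_of f x"
  using orbit_of_funpow[of 0] by simp

lemma orbit_of_closed:
  assumes "y \<in> orbit_of f x" shows "f y \<in> orbit_of f x"
proof -
  from assms obtain n where "y = (f ^^ n) x" unfolding orbit_of_def by blast
  then show ?thesis using orbit_of_funpow[where n="Suc n"] by simp
qed

lemma orbit_of_eq_orbit: "permutation f \<Longrightarrow> orbit_of f x = orbit f x"
  by (simp add: orbit_of_def orbit_altdef_permutation)

lemma orbit_of_eqI:
  assumes "permutation f" "y \<in> orbit_of f x" shows "orbit_of f y = orbit_of f x"
  using assms orbit_cyclic_eq3[OF cyclic_on_orbit'] by (simp add: orbit_of_eq_orbit)

lemma orbit_of_disjoint:
  assumes "permutation f" "orbit_of f x \<noteq> orbit_of f y"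
  shows "orbit_of f x \<inter> orbit_of f y = {}"
  using assms orbit_of_eqI by (metis disjoint_iff)

lemma orbit_of_subset: "f permutes D \<Longrightarrow> finite D \<Longrightarrow> x \<in> D \<Longrightarrow> orbit_of f x \<subseteq> D"
  by (simp add: orbit_of_eq_orbit permutes_imp_permutation permutes_orbit_subset)

lemma sum_card_Int_orbits:
  assumes "f permutes D" "finite D" "X \<subseteq> D"
  shows "(\<Sum>C\<in>orbit_of f ` D. card (X \<inter> C)) = card X"
proof -
  have perm: "permutation f" using permutes_imp_permutation[OF assms(2,1)] .
  have "card (\<Union>C\<in>orbit_of f ` D. X \<inter> C) = (\<Sum>C\<in>orbit_of f ` D. card (X \<inter> C))"
  proof (rule card_UN_disjoint)
    show "finite (orbit_of f ` D)" using assms(2) by simp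
    show "\<forall>C\<in>orbit_of f ` D. finite (X \<inter> C)" using finite_subset[OF assms(3,2)] by simp
    show "\<forall>C\<in>orbit_of f ` D. \<forall>C'\<in>orbit_of f ` D. C \<noteq> C' \<longrightarrow> X \<inter> C \<inter> (X \<inter> C') = {}"
      using orbit_of_disjoint[OF perm] by blast
  qed
  moreover have "(\<Union>C\<in>orbit_of f ` D. X \<inter> C) = X"
    using assms(3) orbit_of_self by fastforce
  ultimately show ?thesis by simp
qed

lemma card_eq_mult_card_orbits:
  assumes "f permutes D" "finite D" "\<And>x. x \<in> D \<Longrightarrow> card (orbit_of f x) = k"
  shows "card D = k * card (orbit_of f ` D)"
proof -
  have "card D = (\<Sum>C\<in>orbit_of f ` D. card (D \<inter> C))"
    using sum_card_Int_orbits[OF assms(1,2) order_refl] by simp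
  also have "\<dots> = (\<Sum>C\<in>orbit_of f ` D. k)"
    using assms by (intro sum.cong) (auto simp: Int_absorb1 orbit_of_subset)
  finally show ?thesis by simp
qed

lemma card_orbit_of_involution:
  assumes "f x \<noteq> x" "f (f x) = x" shows "card (orbit_of f x) = 2"
proof -
  have "(f ^^ n) x \<in> {x, f x}" for n
    by (induct n) (use assms in auto)
  then have "orbit_of f x = {x, f x}"
    using orbit_of_self[of x f] orbit_of_closed[OF orbit_of_self, of f x]
    unfolding orbit_of_def by blast
  then show ?thesis using assms(1) by simp
qed

lemma funpow_neq_self_below_card_orbit_of:
  assumes "permutation f" "0 < n" "n < card (orbit_of f x)"
  shows "(f ^^ n) x \<noteq> x"
proof -
  have x_in: "x \<in> orbit f x" using permutation_self_in_orbit[OF assms(1)] .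
  have "card (orbit f x) = funpow_dist1 f x x"
    unfolding orbit_conv_funpow_dist1[OF x_in]
    by (subst card_image[OF inj_on_funpow_dist1[OF x_in]]) simp
  then show ?thesis
    using assms funpow_dist1_least[of n f x x] by (simp add: orbit_of_eq_orbit)
qed

lemma card_no_consecutive_le_half:
  assumes "finite R" "inj_on f R" "f ` R \<subseteq> R" "\<And>x. x \<in> S \<Longrightarrow> x \<in> R \<Longrightarrow> f x \<notin> S"
  shows "2 * card (S \<inter> R) \<le> card R"
proof -
  have "f ` (S \<inter> R) \<subseteq> R - S" using assms(3,4) by blast
  moreover have "inj_on f (S \<inter> R)" using assms(2) by (rule inj_on_subset) blast
  ultimately have "card (S \<inter> R) \<le> card (R - S)"
    using assms(1) by (metis card_inj_on_le finite_Diff)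
  moreover have "card (R - S) = card R - card (S \<inter> R)"
    using assms(1) by (simp add: card_Diff_subset_Int Int_commute)
  moreover have "card (S \<inter> R) \<le> card R" using assms(1) by (simp add: card_mono)
  ultimately show ?thesis by linarith
qed

locale spherical_curve_map =
  fixes D :: "'a set" and alpha sigma :: "'a \<Rightarrow> 'a"
  assumes curve: "spherical_curve D alpha sigma"
begin

lemma finite_darts: "finite D"
  and alpha_permutes: "alpha permutes D"
  and alpha_neq: "x \<in> D \<Longrightarrow> alpha x \<noteq> x"
  and alpha_alpha: "x \<in> D \<Longrightarrow> alpha (alpha x) = x"
  and sigma_permutes: "sigma permutes D"
  and card_orbit_sigma: "x \<in> D \<Longrightarrow> card (orbit_of sigma x) = 4"
  and euler: "int (card (crossings D sigma)) - int (card (edges D alpha))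
                + int (card (regions D alpha sigma)) = 2"
  using curve unfolding spherical_curve_def by auto

lemma alpha_in_darts: "x \<in> D \<Longrightarrow> alpha x \<in> D"
  and sigma_in_darts: "x \<in> D \<Longrightarrow> sigma x \<in> D"
  using alpha_permutes sigma_permutes by (simp_all add: permutes_in_image)

abbreviation phi :: "'a \<Rightarrow> 'a" where "phi \<equiv> sigma \<circ> alpha"

abbreviation region :: "'a \<Rightarrow> 'a set" where "region \<equiv> region_of alpha sigma"

lemma phi_permutes: "phi permutes D"
  using permutes_compose[OF alpha_permutes sigma_permutes] .

lemma regions_eq: "regions D alpha sigma = region ` D"
  by (simp add: regions_def)

lemma region_self: "x \<in> region x"
  by (simp add: region_of_def orbit_of_self)

lemma phi_in_region: "y \<in> region x \<Longrightarrow> phi y \<in> region x"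
  unfolding region_of_def by (rule orbit_of_closed)

lemma region_eqI: "y \<in> region x \<Longrightarrow> region y = region x"
  unfolding region_of_def
  by (rule orbit_of_eqI[OF permutes_imp_permutation[OF finite_darts phi_permutes]])

lemma region_subset: "x \<in> D \<Longrightarrow> region x \<subseteq> D"
  unfolding region_of_def by (rule orbit_of_subset[OF phi_permutes finite_darts])

lemma finite_region: "x \<in> D \<Longrightarrow> finite (region x)"
  using region_subset finite_darts finite_subset by blast

lemma region_sigma: "x \<in> D \<Longrightarrow> region (sigma x) = region (alpha x)"
  using phi_in_region[OF region_self, of "alpha x"] alpha_alpha by (simp add: region_eqI)

lemma share_edge_region_alpha:
  assumes "x \<in> D" shows "share_edge alpha (region (alpha x)) (region x)"
  unfolding share_edge_def
  using region_self[of "alpha x"] region_self[of x] alpha_alpha[OF assms] by metis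

lemma share_crossing_region_alpha_phi:
  assumes "x \<in> D" shows "share_crossing sigma (region (alpha x)) (region (alpha (phi x)))"
proof -
  have "sigma (phi x) \<in> region (alpha (phi x))"
    using region_sigma[of "phi x"] region_self[of "sigma (phi x)"] assms
    by (simp add: alpha_in_darts sigma_in_darts)
  moreover have "sigma (phi x) \<in> orbit_of sigma (alpha x)"
    using orbit_of_closed[OF orbit_of_closed[OF orbit_of_self]] by simp
  ultimately show ?thesis
    unfolding share_crossing_def using region_self by blast
qed

lemma sum_card_Int_regions:
  "X \<subseteq> D \<Longrightarrow> (\<Sum>R\<in>regions D alpha sigma. card (X \<inter> R)) = card X"
  unfolding regions_def region_of_def
  by (rule sum_card_Int_orbits[OF phi_permutes finite_darts])

lemma sum_four_minus_card_regions:
  "(\<Sum>R\<in>regions D alpha sigma. 4 - int (card R)) = 8"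
proof -
  have crossings: "card D = 4 * card (crossings D sigma)"
    unfolding crossings_def
    by (rule card_eq_mult_card_orbits[OF sigma_permutes finite_darts card_orbit_sigma])
  have edges: "card D = 2 * card (edges D alpha)"
    unfolding edges_def
    by (rule card_eq_mult_card_orbits[OF alpha_permutes finite_darts])
       (simp add: card_orbit_of_involution alpha_neq alpha_alpha)
  have "(\<Sum>R\<in>regions D alpha sigma. card R) = (\<Sum>R\<in>regions D alpha sigma. card (D \<inter> R))"
    using region_subset by (intro sum.cong) (auto simp: regions_eq Int_absorb1)
  also have "\<dots> = card D" by (rule sum_card_Int_regions) simp
  finally have "(\<Sum>R\<in>regions D alpha sigma. 4 - int (card R))
      = 4 * int (card (regions D alpha sigma)) - int (card D)"
    by (simp add: sum_subtractf flip: of_nat_sum)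
  then show ?thesis using euler crossings edges by linarith
qed

definition trigon_facing_darts :: "'a set" where
  "trigon_facing_darts = {x \<in> D. card (region (alpha x)) = 3}"

lemma card_trigon_facing_darts:
  "card trigon_facing_darts = 3 * card {R \<in> regions D alpha sigma. card R = 3}"
proof -
  define T where "T = {x \<in> D. card (region x) = 3}"
  have "trigon_facing_darts = alpha ` T"
    unfolding trigon_facing_darts_def T_def using alpha_alpha alpha_in_darts by force
  then have "card trigon_facing_darts = card T"
    by (simp add: card_image permutes_inj_on[OF alpha_permutes])
  also have "\<dots> = (\<Sum>R\<in>regions D alpha sigma. card (T \<inter> R))"
    by (rule sum_card_Int_regions[symmetric]) (auto simp: T_def)
  also have "\<dots> = (\<Sum>R\<in>{R \<in> regions D alpha sigma. card R = 3}. 3)"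
  proof (subst sum.inter_filter, simp add: finite_darts regions_eq, intro sum.cong refl)
    fix R assume "R \<in> regions D alpha sigma"
    then obtain d where "d \<in> D" "R = region d" by (auto simp: regions_eq)
    then have "T \<inter> R = (if card R = 3 then R else {})"
      unfolding T_def using region_subset region_eqI by auto
    then show "card (T \<inter> R) = (if card R = 3 then 3 else 0)" by simp
  qed
  finally show ?thesis by simp
qed

definition charge :: "'a set \<Rightarrow> int" where
  "charge R = 3 * (4 - int (card R)) + int (card (trigon_facing_darts \<inter> R))
              - (if card R = 3 then 3 else 0)"

lemma sum_charge: "(\<Sum>R\<in>regions D alpha sigma. charge R) = 24"
proof -
  have "(\<Sum>R\<in>regions D alpha sigma. int (card (trigon_facing_darts \<inter> R)))
        = int (card trigon_facing_darts)"
    using sum_card_Int_regions[of trigon_facing_darts]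
    by (simp add: trigon_facing_darts_def flip: of_nat_sum)
  moreover have "(\<Sum>R\<in>regions D alpha sigma. if card R = 3 then 3 else 0 :: int)
        = 3 * int (card {R \<in> regions D alpha sigma. card R = 3})"
    by (subst sum.inter_filter[symmetric]) (simp_all add: finite_darts regions_eq)
  moreover have "(\<Sum>R\<in>regions D alpha sigma. charge R)
      = 3 * (\<Sum>R\<in>regions D alpha sigma. 4 - int (card R))
        + (\<Sum>R\<in>regions D alpha sigma. int (card (trigon_facing_darts \<inter> R)))
        - (\<Sum>R\<in>regions D alpha sigma. if card R = 3 then 3 else 0)"
    by (simp add: charge_def sum.distrib sum_subtractf sum_distrib_left)
  ultimately show ?thesis
    using sum_four_minus_card_regions card_trigon_facing_darts by simp
qed

end

locale reduced_spherical_curve = spherical_curve_map +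
  assumes reduced: "reduced D alpha sigma"
begin

lemma region_funpow_sigma_neq:
  assumes "x \<in> D" "0 < n" "n < 4"
  shows "region ((sigma ^^ n) x) \<noteq> region x"
proof -
  have card_orbit: "card (orbit_of sigma x) = 4" using card_orbit_sigma[OF assms(1)] .
  then have "finite (orbit_of sigma x)" by (intro card_ge_0_finite) simp
  moreover have "card (region ` orbit_of sigma x) = card (orbit_of sigma x)"
    using reduced assms(1) card_orbit unfolding reduced_def by simp
  ultimately have "inj_on region (orbit_of sigma x)" by (rule eq_card_imp_inj_on)
  moreover have "(sigma ^^ n) x \<noteq> x"
    using assms card_orbit permutes_imp_permutation[OF finite_darts sigma_permutes]
    by (intro funpow_neq_self_below_card_orbit_of) simp_all
  ultimately show ?thesis using orbit_of_funpow orbit_of_self by (metis inj_onD)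
qed

lemma region_alpha_neq: "x \<in> D \<Longrightarrow> region (alpha x) \<noteq> region x"
  using region_funpow_sigma_neq[of x 1] by (simp add: region_sigma)

lemma region_alpha_phi_neq:
  assumes "x \<in> D" shows "region (alpha (phi x)) \<noteq> region (alpha x)"
proof -
  have "phi x \<in> D" using assms by (simp add: alpha_in_darts sigma_in_darts)
  then have "region (alpha (phi x)) = region ((sigma ^^ 2) (alpha x))"
    by (simp add: region_sigma numeral_2_eq_2)
  then show ?thesis
    using region_funpow_sigma_neq[of "alpha x" 2] assms by (simp add: alpha_in_darts)
qed

lemma two_le_card_region:
  assumes "x \<in> D" shows "2 \<le> card (region x)"
proof -
  have "phi x \<noteq> x" using region_alpha_phi_neq[OF assms] by metis
  then have "card {x, phi x} = 2" by simp
  moreover have "{x, phi x} \<subseteq> region x" using region_self phi_in_region by blast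
  ultimately show ?thesis using card_mono[OF finite_region[OF assms]] by metis
qed

context
  assumes no_bigon: "\<And>x. x \<in> D \<Longrightarrow> card (region x) \<noteq> 2"
    and isolated_trigons: "\<And>x y. x \<in> D \<Longrightarrow> y \<in> D \<Longrightarrow> card (region x) = 3 \<Longrightarrow>
      region y \<noteq> region x \<Longrightarrow>
      share_edge alpha (region x) (region y) \<or> share_crossing sigma (region x) (region y) \<Longrightarrow>
      card (region y) \<noteq> 3 \<and> card (region y) \<noteq> 4"
begin

lemma three_le_card_region: "x \<in> D \<Longrightarrow> 3 \<le> card (region x)"
  using two_le_card_region no_bigon by fastforce

lemma five_le_card_region_trigon_facing:
  assumes "x \<in> trigon_facing_darts" shows "5 \<le> card (region x)"
proof -
  have x: "x \<in> D" "card (region (alpha x)) = 3"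
    using assms unfolding trigon_facing_darts_def by auto
  then have "card (region x) \<noteq> 3 \<and> card (region x) \<noteq> 4"
    using isolated_trigons[OF alpha_in_darts[OF x(1)] x(1) x(2)]
      region_alpha_neq[OF x(1)] share_edge_region_alpha[OF x(1)] by metis
  then show ?thesis using three_le_card_region[OF x(1)] by linarith
qed

lemma phi_not_trigon_facing:
  assumes "x \<in> trigon_facing_darts" shows "phi x \<notin> trigon_facing_darts"
proof
  assume "phi x \<in> trigon_facing_darts"
  moreover have "x \<in> D" "card (region (alpha x)) = 3"
    using assms unfolding trigon_facing_darts_def by auto
  ultimately show False
    using isolated_trigons[of "alpha x" "alpha (phi x)"]
      region_alpha_phi_neq share_crossing_region_alpha_phi
    by (auto simp: trigon_facing_darts_def alpha_in_darts)
qed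

lemma charge_nonpos:
  assumes "R \<in> regions D alpha sigma" shows "charge R \<le> 0"
proof -
  obtain d where d: "d \<in> D" "R = region d" using assms by (auto simp: regions_eq)
  have three_le: "3 \<le> card R" using three_le_card_region d by simp
  show ?thesis
  proof (cases "card R \<le> 4")
    case True
    have "trigon_facing_darts \<inter> R = {}"
      using five_le_card_region_trigon_facing region_eqI d True by fastforce
    then show ?thesis using True three_le by (simp add: charge_def)
  next
    case False
    have "2 * card (trigon_facing_darts \<inter> R) \<le> card R"
    proof (rule card_no_consecutive_le_half)
      show "finite R" using finite_region d by simp
      show "inj_on phi R" using permutes_inj_on[OF phi_permutes] .
      show "phi ` R \<subseteq> R" using phi_in_region d by blast
    qed (use phi_not_trigon_facing in blast)
    then show ?thesis using False by (simp add: charge_def)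
  qed
qed

end

end

theorem mainTheorem8:
  fixes D :: "'a set" and alpha sigma :: "'a \<Rightarrow> 'a"
  assumes "spherical_curve D alpha sigma"
    and "reduced D alpha sigma"
  shows "(\<exists>R. is_ngon 2 D alpha sigma R) \<or>
         (\<exists>R R'. is_ngon 3 D alpha sigma R \<and> R' \<in> regions D alpha sigma \<and> R' \<noteq> R \<and>
             (is_ngon 3 D alpha sigma R' \<or> is_ngon 4 D alpha sigma R') \<and>
             (share_edge alpha R R' \<or> share_crossing sigma R R'))"
proof (rule ccontr)
  interpret reduced_spherical_curve D alpha sigma
    using assms by unfold_locales
  assume "\<not> ?thesis"
  then have "\<And>x. x \<in> D \<Longrightarrow> card (region x) \<noteq> 2"
    and "\<And>x y. x \<in> D \<Longrightarrow> y \<in> D \<Longrightarrow> card (region x) = 3 \<Longrightarrow> region y \<noteq> region x \<Longrightarrow>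
      share_edge alpha (region x) (region y) \<or> share_crossing sigma (region x) (region y) \<Longrightarrow>
      card (region y) \<noteq> 3 \<and> card (region y) \<noteq> 4"
    by (auto simp: is_ngon_def regions_eq)
  then have "(\<Sum>R\<in>regions D alpha sigma. charge R) \<le> 0"
    by (intro sum_nonpos) (rule charge_nonpos)
  then show False using sum_charge by simp
qed

end
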